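(* Let $(X,S)$ be an $S$-metric space, $r\ge0$, and let $\{x_n\}$ be an $r$-statistically convergent sequence in $X$. Then $\operatorname{diam}(st\text{-}LIM^r x_n)\le 3r$.
   Context: An $S$-metric on a nonempty set $X$ is a function $S:X^3\to[0,\infty)$ such that for all $x,y,z,a\in X$: $S(x,y,z)=0$ if and only if $x=y=z$, and $S(x,y,z)\le S(x,x,a)+S(y,y,a)+S(z,z,a)$. For $B\subset\mathbb N$ the natural density is $\delta(B)=\lim_{n\to\infty}\frac{|\{k\in B:k\le n\}|}{n}$ when the limit exists. For $r\ge0$, $\{x_n\}$ is $r$-statistically convergent to $x$ if for every $\varepsilon>0$, $\delta(\{n\in\mathbb N: S(x_n,x_n,x)\ge r+\varepsilon\})=0$; $st\text{-}LIM^r x_n$ denotes the set of all $x\in X$ to which $\{x_n\}$ is $r$-statistically convergent, and $\{x_n\}$ is called $r$-statistically convergent if this set is nonempty. For $A\subset X$, $\operatorname{diam}(A)=\sup\{S(x,x,y): x,y\in A\}$. *)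

theory Defs
  imports "HOL-Analysis.Analysis" "HOL-Library.Extended_Real"
begin

definition S_metric :: "'a set \<Rightarrow> ('a \<Rightarrow> 'a \<Rightarrow> 'a \<Rightarrow> real) \<Rightarrow> bool" where
  "S_metric X S \<longleftrightarrow> X \<noteq> {} \<and>
     (\<forall>x\<in>X. \<forall>y\<in>X. \<forall>z\<in>X. S x y z \<ge> 0) \<and>
     (\<forall>x\<in>X. \<forall>y\<in>X. \<forall>z\<in>X. S x y z = 0 \<longleftrightarrow> x = y \<and> y = z) \<and>
     (\<forall>x\<in>X. \<forall>y\<in>X. \<forall>z\<in>X. \<forall>a\<in>X. S x y z \<le> S x x a + S y y a + S z z a)"

definition has_density :: "nat set \<Rightarrow> real \<Rightarrow> bool" where
  "has_density B d \<longleftrightarrow>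
     ((\<lambda>n. real (card {k\<in>B. 1 \<le> k \<and> k \<le> n}) / real n) \<longlonglongrightarrow> d)"

definition r_stat_conv_to ::
  "('a \<Rightarrow> 'a \<Rightarrow> 'a \<Rightarrow> real) \<Rightarrow> real \<Rightarrow> (nat \<Rightarrow> 'a) \<Rightarrow> 'a \<Rightarrow> bool" where
  "r_stat_conv_to S r x y \<longleftrightarrow>
     (\<forall>\<epsilon>>0. has_density {n. n \<ge> 1 \<and> S (x n) (x n) y \<ge> r + \<epsilon>} 0)"

definition st_LIM :: "'a set \<Rightarrow> ('a \<Rightarrow> 'a \<Rightarrow> 'a \<Rightarrow> real) \<Rightarrow> real \<Rightarrow> (nat \<Rightarrow> 'a) \<Rightarrow> 'a set" where
  "st_LIM X S r x = {y\<in>X. r_stat_conv_to S r x y}"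

text \<open>Diameter, as an extended real (so that unbounded sets have diameter \<infinity>).\<close>
definition S_diam :: "('a \<Rightarrow> 'a \<Rightarrow> 'a \<Rightarrow> real) \<Rightarrow> 'a set \<Rightarrow> ereal" where
  "S_diam S A = (SUP p\<in>A \<times> A. ereal (S (fst p) (fst p) (snd p)))"

end

theory Submission
  imports Defs
begin

text \<open>If y and z are both r-statistical limits, the indices where x n is not (r + \<epsilon>/3)-close
  to y, resp. to z, form two sets of density zero; their union cannot contain every index, so
  some x n is close to both. The S-metric triangle inequality through x n, together with
  the symmetry S a a b = S b b a, gives S y y z \<le> 2 S (x n) (x n) y + S (x n) (x n) z < 3r + \<epsilon>.\<close>

lemma has_density_0_Un:
  assumes "has_density A 0" and "has_density B 0"
  shows "has_density (A \<union> B) 0"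
proof -
  define cnt where "cnt C = (\<lambda>n. real (card {k\<in>C. 1 \<le> k \<and> k \<le> n}) / real n)" for C
  have le: "cnt (A \<union> B) n \<le> cnt A n + cnt B n" for n
  proof -
    have "{k\<in>A \<union> B. 1 \<le> k \<and> k \<le> n}
        = {k\<in>A. 1 \<le> k \<and> k \<le> n} \<union> {k\<in>B. 1 \<le> k \<and> k \<le> n}"
      by blast
    then have "card {k\<in>A \<union> B. 1 \<le> k \<and> k \<le> n}
        \<le> card {k\<in>A. 1 \<le> k \<and> k \<le> n} + card {k\<in>B. 1 \<le> k \<and> k \<le> n}"
      by (simp add: card_Un_le)
    then show ?thesis
      unfolding cnt_def add_divide_distrib[symmetric] by (intro divide_right_mono) simp_all
  qed
  have "cnt A \<longlonglongrightarrow> 0" and "cnt B \<longlonglongrightarrow> 0"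
    using assms by (simp_all add: has_density_def cnt_def)
  then have sum_lim: "(\<lambda>n. cnt A n + cnt B n) \<longlonglongrightarrow> 0"
    using tendsto_add by fastforce
  have "\<forall>\<^sub>F n in sequentially. 0 \<le> cnt (A \<union> B) n"
    by (simp add: cnt_def)
  moreover have "\<forall>\<^sub>F n in sequentially. cnt (A \<union> B) n \<le> cnt A n + cnt B n"
    using le by simp
  ultimately have "cnt (A \<union> B) \<longlonglongrightarrow> 0"
    by (rule tendsto_sandwich[OF _ _ tendsto_const sum_lim])
  then show ?thesis
    by (simp add: has_density_def cnt_def)
qed

lemma has_density_0_imp_ex_not_in:
  assumes "has_density A 0"
  shows "\<exists>n\<ge>1. n \<notin> A"
proof (rule ccontr)
  assume "\<not> (\<exists>n\<ge>1. n \<notin> A)"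
  then have all_in: "{k\<in>A. 1 \<le> k \<and> k \<le> n} = {1..n}" for n
    by auto
  have "\<forall>\<^sub>F n in sequentially. real (card {k\<in>A. 1 \<le> k \<and> k \<le> n}) / real n = 1"
    using eventually_gt_at_top[of "0::nat"] by (rule eventually_mono) (simp only: all_in, simp)
  then have "(\<lambda>n. real (card {k\<in>A. 1 \<le> k \<and> k \<le> n}) / real n) \<longlonglongrightarrow> 1"
    by (rule tendsto_eventually)
  moreover have "(\<lambda>n. real (card {k\<in>A. 1 \<le> k \<and> k \<le> n}) / real n) \<longlonglongrightarrow> 0"
    using assms by (simp only: has_density_def)
  ultimately show False
    using LIMSEQ_unique by force
qed

lemma S_metric_self_eq_0:
  assumes "S_metric X S" and "a \<in> X"
  shows "S a a a = 0"
  using assms unfolding S_metric_def by simp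

lemma S_metric_triangle:
  assumes "S_metric X S" and "a \<in> X" "b \<in> X" "c \<in> X" "d \<in> X"
  shows "S a b c \<le> S a a d + S b b d + S c c d"
  using assms(1) unfolding S_metric_def by (meson assms(2-5))

lemma S_metric_sym:
  assumes "S_metric X S" and "a \<in> X" "b \<in> X"
  shows "S a a b = S b b a"
proof -
  have "S a a b \<le> S a a a + S a a a + S b b a" and "S b b a \<le> S b b b + S b b b + S a a b"
    using S_metric_triangle[OF assms(1)] assms(2,3) by blast+
  moreover have "S a a a = 0" and "S b b b = 0"
    using S_metric_self_eq_0[OF assms(1)] assms(2,3) by blast+
  ultimately show ?thesis
    by linarith
qed

lemma S_metric_triangle_via:
  assumes "S_metric X S" and "a \<in> X" "b \<in> X" "c \<in> X"
  shows "S b b c \<le> 2 * S a a b + S a a c"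
proof -
  have "S b b c \<le> S b b a + S b b a + S c c a"
    using S_metric_triangle[OF assms(1)] assms(2-4) by blast
  moreover have "S b b a = S a a b" and "S c c a = S a a c"
    using S_metric_sym[OF assms(1)] assms(2-4) by blast+
  ultimately show ?thesis
    by linarith
qed

lemma st_LIM_S_le_3r:
  assumes "S_metric X S" and "\<And>n. x n \<in> X"
    and y: "y \<in> st_LIM X S r x" and z: "z \<in> st_LIM X S r x"
  shows "S y y z \<le> 3 * r"
proof (rule field_le_epsilon)
  fix e :: real
  assume "e > 0"
  then have "has_density {n. n \<ge> 1 \<and> S (x n) (x n) y \<ge> r + e/3} 0"
    and "has_density {n. n \<ge> 1 \<and> S (x n) (x n) z \<ge> r + e/3} 0"
    using y z by (auto simp: st_LIM_def r_stat_conv_to_def)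
  then obtain n where close: "S (x n) (x n) y < r + e/3" "S (x n) (x n) z < r + e/3"
    using has_density_0_imp_ex_not_in[OF has_density_0_Un] by (force simp: not_le)
  have "S y y z \<le> 2 * S (x n) (x n) y + S (x n) (x n) z"
    using S_metric_triangle_via[OF assms(1,2)] y z by (auto simp: st_LIM_def)
  also have "\<dots> \<le> 3 * r + e"
    using close by simp
  finally show "S y y z \<le> 3 * r + e" .
qed

theorem theorem4p2:
  fixes X :: "'a set" and S :: "'a \<Rightarrow> 'a \<Rightarrow> 'a \<Rightarrow> real"
    and r :: real and x :: "nat \<Rightarrow> 'a"
  assumes "S_metric X S"
    and "r \<ge> 0"
    and "\<And>n. x n \<in> X"
    and "st_LIM X S r x \<noteq> {}"
  shows "S_diam S (st_LIM X S r x) \<le> ereal (3 * r)"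
  unfolding S_diam_def
  using st_LIM_S_le_3r[OF assms(1,3)] by (auto intro!: SUP_least)

end
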